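(* In the ladder model, the Markov chain $(\Delta_n)_{n\ge0}$ is ergodic: it has a unique stationary distribution, which has a density $\rho_\infty$, and $\Delta_n$ converges in distribution, as $n\to\infty$, to a non-degenerate random variable $\Delta$ with density $\rho_\infty=\lim_{n\to\infty}\rho_n$, where $\rho_n$ is the density of $\Delta_n$.
   Context: Ladder model $\mathcal{G}^{\{\mathcal{X},\mathcal{Y},\mathcal{Z}\}}$: for $n\ge0$, $G_n$ has vertex set $\{0,\dots,n\}\times\{0,1\}$ and edges: for $1\le i\le n$, an edge with weight $X_i$ joining $(i-1,0)$ and $(i,0)$, an edge with weight $Y_i$ joining $(i-1,1)$ and $(i,1)$; for $0\le i\le n$, an edge with weight $Z_i$ joining $(i,0)$ and $(i,1)$. All weights are independent standard exponential random variables. Path weight = sum of edge weights. $l_n$ ($l_n'$) is the minimal weight of a path in $G_n$ from $(0,0)$ to $(n,0)$ (to $(n,1)$), and $\Delta_n=l_n'-l_n$. $(\Delta_n)$ is a Markov chain with $\Delta_0$ standard exponential and $\Delta_n=\min\{\Delta_{n-1}+Y_n,X_n+Z_n\}-\min\{X_n,\Delta_{n-1}+Y_n+Z_n\}$ for $n\ge1$. *)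

theory Defs
  imports "HOL-Probability.Probability"
begin

text \<open>Edges of the ladder: XE i (i >= 1) bottom rail, YE i (i >= 1) top rail,
  ZE i (i >= 0) rungs.\<close>
datatype edge = XE nat | YE nat | ZE nat

definition ladder_edges :: "edge set" where
  "ladder_edges = {XE i | i. 1 \<le> i} \<union> {YE i | i. 1 \<le> i} \<union> range ZE"

definition ladder_step :: "real \<Rightarrow> real \<Rightarrow> real \<Rightarrow> real \<Rightarrow> real" where
  "ladder_step d x y z = min (d + y) (x + z) - min x (d + y + z)"

text \<open>Delta_n as a random variable built from the edge weights W.
  Delta_0 = l_0' - l_0 = Z_0.\<close>
fun Delta :: "(edge \<Rightarrow> 'a \<Rightarrow> real) \<Rightarrow> nat \<Rightarrow> 'a \<Rightarrow> real" where
  "Delta W 0 \<omega> = W (ZE 0) \<omega>"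
| "Delta W (Suc n) \<omega> =
     ladder_step (Delta W n \<omega>) (W (XE (Suc n)) \<omega>) (W (YE (Suc n)) \<omega>) (W (ZE (Suc n)) \<omega>)"

definition Exp1 :: "real measure" where
  "Exp1 = density lborel (\<lambda>x. ennreal (exponential_density 1 x))"

definition ladder_kernel :: "real \<Rightarrow> real measure" where
  "ladder_kernel d = distr (Exp1 \<Otimes>\<^sub>M (Exp1 \<Otimes>\<^sub>M Exp1)) borel
                        (\<lambda>(x, y, z). ladder_step d x y z)"

definition ladder_stationary :: "real measure \<Rightarrow> bool" where
  "ladder_stationary \<pi> \<longleftrightarrow> prob_space \<pi> \<and> sets \<pi> = sets borel \<and>
     (\<forall>A \<in> sets borel. emeasure \<pi> A = (\<integral>\<^sup>+ d. emeasure (ladder_kernel d) A \<partial>\<pi>))"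

end

theory Submission
  imports Defs
begin

(* Ergodicity of the ladder chain by a Doeblin argument.

   Write K for ladder_kernel: K d is the law of ladder_step d X Y Z with X, Y, Z independent
   standard exponentials, so the law of Delta (n+1) is the law of Delta n bound with K.
   (1) Absolute continuity: ladder_step d x y z is one of z, -z or d + y - x, each of which
       has a Lebesgue density when z (resp. y) is exponential; hence every K d, every law
       after one step and every stationary law has a density.
   (2) Minorization: since |ladder_step d x y z| <= z, one step lands in [-1,1] with
       probability at least e^-1; from |d| <= 1, on the event X, Z in [2,3] the step equals
       d + Y - X, whose law has density at least e^-11 on [-1,1].  So the two-step kernel
       K2 d dominates e^-12 times Lebesgue measure on [-1,1], uniformly in d.
   (3) Doeblin's argument turns such a minorization into a strict contraction of K2 in the
       L1 distance between probability densities, with factor 1 - 2 e^-12.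
   (4) Hence the stationary law is unique, and the L1 increments of the densities of Delta n
       decay geometrically.  Summable L1 increments give versions of the densities converging
       pointwise and in L1 to a probability density; its law is stationary (pass to the limit
       in mu (n+1) = mu n bound with K) and the distribution functions converge.
   (5) Independence of the edge weights shows that the laws of Delta n form this chain. *)

lemma space_eq_UNIV_of_sets_borel: "sets P = sets (borel::real measure) \<Longrightarrow> space P = UNIV"
  using sets_eq_imp_space_eq by fastforce

lemma integrable_mult_bounded:
  fixes f g :: "'a \<Rightarrow> real"
  assumes f: "integrable M f" and g: "g \<in> borel_measurable M" and b: "\<And>x. \<bar>g x\<bar> \<le> 1"
  shows "integrable M (\<lambda>x. f x * g x)"
proof (rule Bochner_Integration.integrable_bound[OF f])
  show "(\<lambda>x. f x * g x) \<in> borel_measurable M" using f g by (intro borel_measurable_times) auto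
  show "AE x in M. norm (f x * g x) \<le> norm (f x)"
    using b by (auto simp: abs_mult intro!: mult_left_le)
qed

lemma integral_mult_bounded_diff_le:
  fixes p q k :: "'a::euclidean_space \<Rightarrow> real"
  assumes p: "integrable M p" and q: "integrable M q"
    and k: "k \<in> borel_measurable M" "\<And>x. \<bar>k x\<bar> \<le> 1"
  shows "\<bar>(\<integral>x. p x * k x \<partial>M) - (\<integral>x. q x * k x \<partial>M)\<bar> \<le> (\<integral>x. \<bar>p x - q x\<bar> \<partial>M)"
proof -
  have "(\<integral>x. p x * k x \<partial>M) - (\<integral>x. q x * k x \<partial>M) = (\<integral>x. (p x - q x) * k x \<partial>M)"
    using integrable_mult_bounded[OF p k] integrable_mult_bounded[OF q k] by (simp add: left_diff_distrib)
  also have "\<bar>\<dots>\<bar> \<le> (\<integral>x. \<bar>p x - q x\<bar> \<partial>M)"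
  proof (rule integral_abs_bound_integral)
    show "integrable M (\<lambda>x. (p x - q x) * k x)" using p q k by (intro integrable_mult_bounded) auto
    show "integrable M (\<lambda>x. \<bar>p x - q x\<bar>)" using p q by auto
    show "\<bar>(p x - q x) * k x\<bar> \<le> \<bar>p x - q x\<bar>" for x
      using k(2)[of x] by (auto simp: abs_mult intro: mult_left_le)
  qed
  finally show ?thesis .
qed

lemma density_of_absolutely_continuous:
  assumes N: "prob_space N" "sets N = sets borel" and ac: "absolutely_continuous lborel N"
  shows "\<exists>f. f \<in> borel_measurable borel \<and> (\<forall>x. 0 \<le> f x) \<and> N = density lborel (\<lambda>x. ennreal (f x))"
proof -
  have sf: "sigma_finite_measure N" using N(1) by (rule prob_space_imp_sigma_finite)
  have eq: "density lborel (RN_deriv lborel N) = N"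
    using sigma_finite_measure.density_RN_deriv[OF sigma_finite_lborel ac] N(2) by simp
  have fin: "AE x in lborel. RN_deriv lborel N x \<noteq> \<infinity>"
    using sigma_finite_measure.RN_deriv_finite[OF sigma_finite_lborel sf ac] N(2) by simp
  let ?f = "\<lambda>x. enn2real (RN_deriv lborel N x)"
  have "density lborel (\<lambda>x. ennreal (?f x)) = density lborel (RN_deriv lborel N)"
    by (rule density_cong) (use fin in \<open>auto simp: less_top\<close>)
  then show ?thesis using eq by (intro exI[of _ ?f]) auto
qed

lemma probability_density_integral:
  assumes f: "f \<in> borel_measurable borel" "\<And>x. 0 \<le> f x"
    and P: "prob_space (density lborel (\<lambda>x. ennreal (f x)))"
  shows "integrable lborel f" "(\<integral>x. f x \<partial>lborel) = 1"
proof -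
  have "(\<integral>\<^sup>+x. ennreal (f x) \<partial>lborel) = emeasure (density lborel (\<lambda>x. ennreal (f x))) UNIV"
    using f by (simp add: emeasure_density)
  also have "\<dots> = 1" using prob_space.emeasure_space_1[OF P] by simp
  finally have 1: "(\<integral>\<^sup>+x. ennreal (f x) \<partial>lborel) = 1" .
  show i: "integrable lborel f" using f 1 by (intro integrableI_nonneg) auto
  have "ennreal (\<integral>x. f x \<partial>lborel) = 1" using nn_integral_eq_integral[OF i] f 1 by simp
  then show "(\<integral>x. f x \<partial>lborel) = 1" using f by (simp add: integral_nonneg_AE)
qed

lemma measure_density_integral:
  assumes p: "p \<in> borel_measurable borel" "\<And>x. 0 \<le> p x" "integrable lborel p" and A: "A \<in> sets borel"
  shows "measure (density lborel (\<lambda>x. ennreal (p x))) A = (\<integral>x. p x * indicator A x \<partial>lborel)"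
proof -
  have i: "integrable lborel (\<lambda>x. p x * indicator A x)"
    using integrable_real_mult_indicator[of A lborel p] p A by simp
  have "emeasure (density lborel (\<lambda>x. ennreal (p x))) A = (\<integral>\<^sup>+x. ennreal (p x) * indicator A x \<partial>lborel)"
    using p A by (simp add: emeasure_density)
  also have "\<dots> = (\<integral>\<^sup>+x. ennreal (p x * indicator A x) \<partial>lborel)"
    by (intro nn_integral_cong) (auto simp: indicator_def)
  also have "\<dots> = ennreal (\<integral>x. p x * indicator A x \<partial>lborel)"
    using i p by (intro nn_integral_eq_integral) auto
  finally show ?thesis using p by (simp add: measure_def integral_nonneg_AE)
qed

lemma measure_density_bind:
  assumes L: "L \<in> measurable borel (subprob_algebra borel)" "\<And>d. prob_space (L d)"
    and f: "f \<in> borel_measurable borel" "\<And>x. 0 \<le> f x" "integrable lborel f" and A: "A \<in> sets borel"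
  shows "measure (density lborel (\<lambda>x. ennreal (f x)) \<bind> L) A = (\<integral>d. f d * measure (L d) A \<partial>lborel)"
    and "integrable lborel (\<lambda>d. f d * measure (L d) A)"
proof -
  have mL: "(\<lambda>d. measure (L d) A) \<in> borel_measurable borel"
    by (rule measurable_compose[OF L(1) measurable_measure_subprob_algebra]) (use A in simp)
  show i: "integrable lborel (\<lambda>d. f d * measure (L d) A)"
    using mL by (intro integrable_mult_bounded f) (auto intro!: prob_space.prob_le_1[OF L(2)])
  have L': "L \<in> measurable (density lborel (\<lambda>x. ennreal (f x))) (subprob_algebra borel)"
    using L(1) measurable_cong_sets by (metis sets_density sets_lborel)
  have "emeasure (density lborel (\<lambda>x. ennreal (f x)) \<bind> L) A
      = (\<integral>\<^sup>+d. emeasure (L d) A \<partial>density lborel (\<lambda>x. ennreal (f x)))"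
    by (rule emeasure_bind[OF _ L']) (use A in auto)
  also have "\<dots> = (\<integral>\<^sup>+d. ennreal (f d) * emeasure (L d) A \<partial>lborel)"
    using f A by (intro nn_integral_density) (auto intro!: measurable_compose[OF L(1) measurable_emeasure_subprob_algebra])
  also have "\<dots> = (\<integral>\<^sup>+d. ennreal (f d * measure (L d) A) \<partial>lborel)"
    by (intro nn_integral_cong)
       (simp add: finite_measure.emeasure_eq_measure[OF prob_space.finite_measure[OF L(2)]] ennreal_mult f(2))
  also have "\<dots> = ennreal (\<integral>d. f d * measure (L d) A \<partial>lborel)"
    using i f by (intro nn_integral_eq_integral) auto
  finally show "measure (density lborel (\<lambda>x. ennreal (f x)) \<bind> L) A = (\<integral>d. f d * measure (L d) A \<partial>lborel)"
    using f by (simp add: measure_def integral_nonneg_AE)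
qed

section \<open>Doeblin's contraction in L1\<close>

text \<open>The L1 distance between the images p, q of densities f, g under a Markov kernel L,
  written as an integral against f - g, by testing on the set where p dominates q.\<close>

lemma L1_distance_kernel_images:
  fixes L :: "real \<Rightarrow> real measure" and f g p q :: "real \<Rightarrow> real"
  defines "A \<equiv> {x. q x \<le> p x}"
  assumes L: "L \<in> measurable borel (subprob_algebra borel)" "\<And>d. prob_space (L d)"
    and f: "f \<in> borel_measurable borel" "\<And>x. 0 \<le> f x" "integrable lborel f"
    and g: "g \<in> borel_measurable borel" "\<And>x. 0 \<le> g x" "integrable lborel g"
    and p: "p \<in> borel_measurable borel" "\<And>x. 0 \<le> p x" "integrable lborel p"
      "density lborel (\<lambda>x. ennreal (f x)) \<bind> L = density lborel (\<lambda>x. ennreal (p x))"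
    and q: "q \<in> borel_measurable borel" "\<And>x. 0 \<le> q x" "integrable lborel q"
      "density lborel (\<lambda>x. ennreal (g x)) \<bind> L = density lborel (\<lambda>x. ennreal (q x))"
  shows "(\<integral>x. \<bar>p x - q x\<bar> \<partial>lborel)
       = (\<integral>d. (f d - g d) * (measure (L d) A - measure (L d) (- A)) \<partial>lborel)"
proof -
  have A: "A \<in> sets borel" "- A \<in> sets borel" using p(1) q(1) unfolding A_def by measurable
  have image: "(\<integral>x. r x * indicator B x \<partial>lborel) = (\<integral>d. e d * measure (L d) B \<partial>lborel)"
    if e: "e \<in> borel_measurable borel" "\<And>x. 0 \<le> e x" "integrable lborel e"
      and r: "r \<in> borel_measurable borel" "\<And>x. 0 \<le> r x" "integrable lborel r"
      "density lborel (\<lambda>x. ennreal (e x)) \<bind> L = density lborel (\<lambda>x. ennreal (r x))"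
      and B: "B \<in> sets borel" for e r :: "real \<Rightarrow> real" and B :: "real set"
    using measure_density_integral[OF r(1-3) B] measure_density_bind(1)[OF L e B] r(4) by simp
  have int_test: "integrable lborel (\<lambda>x. r x * indicator B x)"
    if "integrable lborel r" "B \<in> sets borel" for r :: "real \<Rightarrow> real" and B :: "real set"
    using that integrable_real_mult_indicator[of B lborel r] by simp
  have int_kernel: "integrable lborel (\<lambda>d. e d * measure (L d) B)"
    if "e \<in> borel_measurable borel" "\<And>x. 0 \<le> e x" "integrable lborel e" "B \<in> sets borel"
    for e :: "real \<Rightarrow> real" and B :: "real set"
    using measure_density_bind(2)[OF L that] .
  have "(\<integral>x. \<bar>p x - q x\<bar> \<partial>lborel) =
      (\<integral>x. (p x * indicator A x - q x * indicator A x) + (q x * indicator (- A) x - p x * indicator (- A) x) \<partial>lborel)"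
    by (intro Bochner_Integration.integral_cong) (auto simp: A_def indicator_def)
  also have "\<dots> = ((\<integral>x. p x * indicator A x \<partial>lborel) - (\<integral>x. q x * indicator A x \<partial>lborel))
       + ((\<integral>x. q x * indicator (- A) x \<partial>lborel) - (\<integral>x. p x * indicator (- A) x \<partial>lborel))"
    using int_test[OF p(3) A(1)] int_test[OF q(3) A(1)] int_test[OF p(3) A(2)] int_test[OF q(3) A(2)] by simp
  also have "\<dots> = ((\<integral>d. f d * measure (L d) A \<partial>lborel) - (\<integral>d. g d * measure (L d) A \<partial>lborel))
       + ((\<integral>d. g d * measure (L d) (- A) \<partial>lborel) - (\<integral>d. f d * measure (L d) (- A) \<partial>lborel))"
    using image[OF f p] image[OF g q] A by simp
  also have "\<dots> = (\<integral>d. (f d - g d) * (measure (L d) A - measure (L d) (- A)) \<partial>lborel)"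
    using int_kernel[OF f A(1)] int_kernel[OF g A(1)] int_kernel[OF f A(2)] int_kernel[OF g A(2)]
    by (simp add: algebra_simps)
  finally show ?thesis .
qed

text \<open>If a probability law Q dominates eps times a finite measure nu, the excess of Q over the
  common part eps nu has total mass 1 - eps nu(R); so its signed mass on any set A and its
  complement differ by at most that much.\<close>

lemma minorized_excess_bound:
  fixes Q \<nu> :: "real measure"
  assumes Q: "prob_space Q" "sets Q = sets borel" and \<nu>: "finite_measure \<nu>" "sets \<nu> = sets borel"
    and minor: "\<And>B. B \<in> sets borel \<Longrightarrow> \<epsilon> * measure \<nu> B \<le> measure Q B" and A: "A \<in> sets borel"
  shows "\<bar>(measure Q A - \<epsilon> * measure \<nu> A) - (measure Q (- A) - \<epsilon> * measure \<nu> (- A))\<bar>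
           \<le> 1 - \<epsilon> * measure \<nu> UNIV"
proof -
  have "- A \<in> sets borel" using A by simp
  then have "0 \<le> measure Q A - \<epsilon> * measure \<nu> A" "0 \<le> measure Q (- A) - \<epsilon> * measure \<nu> (- A)"
    using minor A by auto
  moreover have "measure Q A + measure Q (- A) = 1"
    using prob_space.prob_compl[OF Q(1), of A] A Q(2) space_eq_UNIV_of_sets_borel[OF Q(2)]
    by (simp add: Compl_eq_Diff_UNIV)
  moreover have "measure \<nu> A + measure \<nu> (- A) = measure \<nu> UNIV"
    using finite_measure.finite_measure_compl[OF \<nu>(1), of A] A \<nu>(2)
    by (simp add: space_eq_UNIV_of_sets_borel Compl_eq_Diff_UNIV)
  then have "\<epsilon> * measure \<nu> A + \<epsilon> * measure \<nu> (- A) = \<epsilon> * measure \<nu> UNIV"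
    by (metis distrib_left)
  ultimately show ?thesis by linarith
qed

text \<open>Testing on the set
  where p dominates q, the common part eps nu contributes nothing because f - g has integral
  zero, and the excess is bounded by the previous lemma.\<close>

lemma doeblin_L1_contraction:
  fixes L :: "real \<Rightarrow> real measure" and \<nu> :: "real measure" and f g p q :: "real \<Rightarrow> real"
  assumes L: "L \<in> measurable borel (subprob_algebra borel)" "\<And>d. prob_space (L d)"
    and \<nu>: "finite_measure \<nu>" "sets \<nu> = sets borel"
    and minor: "\<And>d A. A \<in> sets borel \<Longrightarrow> \<epsilon> * measure \<nu> A \<le> measure (L d) A" and "0 \<le> \<epsilon>"
    and f: "f \<in> borel_measurable borel" "\<And>x. 0 \<le> f x" "integrable lborel f"
    and g: "g \<in> borel_measurable borel" "\<And>x. 0 \<le> g x" "integrable lborel g"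
    and mass: "(\<integral>x. f x \<partial>lborel) = (\<integral>x. g x \<partial>lborel)"
    and p: "p \<in> borel_measurable borel" "\<And>x. 0 \<le> p x" "integrable lborel p"
      "density lborel (\<lambda>x. ennreal (f x)) \<bind> L = density lborel (\<lambda>x. ennreal (p x))"
    and q: "q \<in> borel_measurable borel" "\<And>x. 0 \<le> q x" "integrable lborel q"
      "density lborel (\<lambda>x. ennreal (g x)) \<bind> L = density lborel (\<lambda>x. ennreal (q x))"
  shows "(\<integral>x. \<bar>p x - q x\<bar> \<partial>lborel) \<le> (1 - \<epsilon> * measure \<nu> UNIV) * (\<integral>x. \<bar>f x - g x\<bar> \<partial>lborel)"
proof -
  define A where "A = {x. q x \<le> p x}"
  have A: "A \<in> sets borel" using p(1) q(1) unfolding A_def by measurable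
  define h where "h d = f d - g d" for d
  have h: "integrable lborel h" and h0: "(\<integral>d. h d \<partial>lborel) = 0"
    unfolding h_def using f g mass by auto
  define r where "r d = (measure (L d) A - \<epsilon> * measure \<nu> A) - (measure (L d) (- A) - \<epsilon> * measure \<nu> (- A))" for d
  have r_bound: "\<bar>r d\<bar> \<le> 1 - \<epsilon> * measure \<nu> UNIV" for d
    unfolding r_def
  proof (rule minorized_excess_bound[OF L(2) _ \<nu> minor A])
    show "sets (L d) = sets borel"
      using measurable_space[OF L(1), of d] by (simp add: space_subprob_algebra)
  qed
  have "0 \<le> \<epsilon> * measure \<nu> UNIV" using \<open>0 \<le> \<epsilon>\<close> by simp
  then have r_le_1: "\<bar>r d\<bar> \<le> 1" for d using r_bound[of d] by linarith
  have "r \<in> borel_measurable borel"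
    unfolding r_def[abs_def] using A
    by (auto intro!: borel_measurable_diff measurable_compose[OF L(1) measurable_measure_subprob_algebra])
  then have int_hr: "integrable lborel (\<lambda>d. h d * r d)"
    using r_le_1 by (intro integrable_mult_bounded h) simp_all
  have "(\<integral>x. \<bar>p x - q x\<bar> \<partial>lborel) = (\<integral>d. h d * (measure (L d) A - measure (L d) (- A)) \<partial>lborel)"
    unfolding h_def A_def by (rule L1_distance_kernel_images[OF L f g p q])
  also have "\<dots> = (\<integral>d. h d * r d + (\<epsilon> * (measure \<nu> A - measure \<nu> (- A))) * h d \<partial>lborel)"
    by (intro Bochner_Integration.integral_cong) (auto simp: r_def algebra_simps)
  also have "\<dots> = (\<integral>d. h d * r d \<partial>lborel)"
    using int_hr h h0 by simp
  also have "\<dots> \<le> (\<integral>d. \<bar>h d\<bar> * (1 - \<epsilon> * measure \<nu> UNIV) \<partial>lborel)"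
  proof (rule Bochner_Integration.integral_mono[OF int_hr])
    show "integrable lborel (\<lambda>d. \<bar>h d\<bar> * (1 - \<epsilon> * measure \<nu> UNIV))" using h by simp
    show "h d * r d \<le> \<bar>h d\<bar> * (1 - \<epsilon> * measure \<nu> UNIV)" for d
    proof -
      have "h d * r d \<le> \<bar>h d\<bar> * \<bar>r d\<bar>" by (simp add: abs_mult flip: abs_mult)
      also have "\<dots> \<le> \<bar>h d\<bar> * (1 - \<epsilon> * measure \<nu> UNIV)" using r_bound by (intro mult_left_mono) auto
      finally show ?thesis .
    qed
  qed
  also have "\<dots> = (1 - \<epsilon> * measure \<nu> UNIV) * (\<integral>x. \<bar>f x - g x\<bar> \<partial>lborel)"
    by (simp add: h_def mult.commute)
  finally show ?thesis .
qed

section \<open>Densities with summable L1 increments converge\<close>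

lemma summable_two_step_decay:
  fixes a :: "nat \<Rightarrow> real"
  assumes nonneg: "\<And>n. 0 \<le> a n" and bounded: "\<And>n. a n \<le> B"
    and decay: "\<And>n. a (Suc (Suc n)) \<le> c * a n" and c: "0 \<le> c" "c < 1"
  shows "summable a"
proof -
  define s where "s = (1 + c) / 2"
  have s: "0 < s" "s < 1" "c \<le> s\<^sup>2"
  proof -
    show "0 < s" "s < 1" unfolding s_def using c by auto
    have "0 \<le> (1 - c)\<^sup>2" by simp
    then show "c \<le> s\<^sup>2" unfolding s_def by (simp add: power2_eq_square field_simps)
  qed
  have geometric: "a n \<le> (B / s) * s ^ n \<and> a (Suc n) \<le> (B / s) * s ^ Suc n" for n
  proof (induction n)
    case 0
    have "0 \<le> B" using nonneg[of 0] bounded[of 0] by simp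
    then have "B * s \<le> B" using s by (simp add: mult_left_le)
    then have "B \<le> B / s" using s by (simp add: field_simps)
    then show ?case using bounded[of 0] bounded[of 1] s by simp
  next
    case (Suc n)
    have "a (Suc (Suc n)) \<le> c * a n" by (rule decay)
    also have "\<dots> \<le> s\<^sup>2 * ((B / s) * s ^ n)"
      using Suc.IH s c nonneg[of n] by (intro mult_mono) auto
    also have "\<dots> = (B / s) * s ^ Suc (Suc n)" by (simp add: power2_eq_square)
    finally show ?case using Suc.IH by simp
  qed
  show ?thesis
  proof (rule summable_comparison_test)
    show "\<exists>N. \<forall>n\<ge>N. norm (a n) \<le> (B / s) * s ^ n" using geometric nonneg by auto
    show "summable (\<lambda>n. (B / s) * s ^ n)" using s by (intro summable_mult summable_geometric) auto
  qed
qed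

lemma integral_test_tendsto:
  fixes f :: "nat \<Rightarrow> real \<Rightarrow> real"
  assumes fn: "\<And>n. integrable lborel (f n)" and f: "integrable lborel g"
    and L1: "(\<lambda>n. \<integral>x. \<bar>g x - f n x\<bar> \<partial>lborel) \<longlonglongrightarrow> 0"
    and k: "k \<in> borel_measurable borel" "\<And>x. \<bar>k x\<bar> \<le> 1"
  shows "(\<lambda>n. \<integral>x. f n x * k x \<partial>lborel) \<longlonglongrightarrow> (\<integral>x. g x * k x \<partial>lborel)"
proof -
  have "\<bar>(\<integral>x. f n x * k x \<partial>lborel) - (\<integral>x. g x * k x \<partial>lborel)\<bar> \<le> (\<integral>x. \<bar>g x - f n x\<bar> \<partial>lborel)" for n
    using integral_mult_bounded_diff_le[OF fn f, of k n] k by (simp add: abs_minus_commute)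
  then show ?thesis
    by (subst LIM_zero_iff[symmetric]) (rule Lim_null_comparison[OF _ L1], auto)
qed

text \<open>Then the increments
  are summable pointwise outside a null set; modifying rho n to vanish there gives versions
  that converge everywhere, to a limit which is also their limit in L1.\<close>

locale summable_L1_increments =
  fixes \<rho> :: "nat \<Rightarrow> real \<Rightarrow> real"
  assumes measurable[measurable]: "\<And>n. \<rho> n \<in> borel_measurable borel"
    and nonneg: "\<And>n x. 0 \<le> \<rho> n x"
    and integrable: "\<And>n. integrable lborel (\<rho> n)"
    and summable: "summable (\<lambda>n. \<integral>x. \<bar>\<rho> (Suc n) x - \<rho> n x\<bar> \<partial>lborel)"
begin

definition increment :: "nat \<Rightarrow> real \<Rightarrow> real" where
  "increment n x = \<bar>\<rho> (Suc n) x - \<rho> n x\<bar>"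

definition tail :: "nat \<Rightarrow> real" where
  "tail n = (\<Sum>k. \<integral>x. increment (k + n) x \<partial>lborel)"

lemma increment_measurable[measurable]: "increment n \<in> borel_measurable borel"
  unfolding increment_def[abs_def] by measurable

lemma summable_increment: "summable (\<lambda>n. \<integral>x. increment n x \<partial>lborel)"
  using summable by (simp add: increment_def[abs_def])

lemma tail_nonneg: "0 \<le> tail n"
  unfolding tail_def using summable_increment
  by (intro suminf_nonneg summable_ignore_initial_segment) (auto simp: increment_def)

lemma tail_tendsto_0: "tail \<longlonglongrightarrow> 0"
proof -
  let ?a = "\<lambda>n. \<integral>x. increment n x \<partial>lborel"
  have "tail = (\<lambda>n. suminf ?a - (\<Sum>i<n. ?a i))"
    unfolding tail_def by (rule ext) (rule suminf_minus_initial_segment[OF summable_increment])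
  moreover have "(\<lambda>n. suminf ?a - (\<Sum>i<n. ?a i)) \<longlonglongrightarrow> suminf ?a - suminf ?a"
    by (intro tendsto_diff tendsto_const summable_LIMSEQ summable_increment)
  ultimately show ?thesis by simp
qed

lemma nn_integral_increment: "(\<integral>\<^sup>+x. ennreal (increment n x) \<partial>lborel) = ennreal (\<integral>x. increment n x \<partial>lborel)"
  unfolding increment_def using integrable[of n] integrable[of "Suc n"]
  by (intro nn_integral_eq_integral) auto

lemma nn_integral_tail: "(\<integral>\<^sup>+x. (\<Sum>k. ennreal (increment (k + n) x)) \<partial>lborel) = ennreal (tail n)"
proof -
  have "(\<integral>\<^sup>+x. (\<Sum>k. ennreal (increment (k + n) x)) \<partial>lborel)
      = (\<Sum>k. (\<integral>\<^sup>+x. ennreal (increment (k + n) x) \<partial>lborel))"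
    by (rule nn_integral_suminf) simp
  also have "\<dots> = (\<Sum>k. ennreal (\<integral>x. increment (k + n) x \<partial>lborel))"
    by (simp add: nn_integral_increment)
  also have "\<dots> = ennreal (tail n)" unfolding tail_def
    using summable_increment
    by (intro suminf_ennreal2 summable_ignore_initial_segment) (auto simp: increment_def)
  finally show ?thesis .
qed

definition good :: "real set" where
  "good = {x. (\<Sum>n. ennreal (increment n x)) \<noteq> top}"

lemma good_sets[measurable]: "good \<in> sets borel"
  unfolding good_def by measurable

lemma AE_good: "AE x in lborel. x \<in> good"
proof -
  have "(\<integral>\<^sup>+x. (\<Sum>n. ennreal (increment (n + 0) x)) \<partial>lborel) \<noteq> top"
    using nn_integral_tail[of 0] by simp
  then show ?thesis
    using nn_integral_noteq_infinite[of "\<lambda>x. \<Sum>n. ennreal (increment (n + 0) x)" lborel]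
    by (simp add: good_def)
qed

lemma good_summable: "x \<in> good \<Longrightarrow> summable (\<lambda>n. increment n x)"
  unfolding good_def by (rule summable_suminf_not_top) (auto simp: increment_def)

lemma good_tail_bound:
  assumes "x \<in> good" shows "\<bar>\<rho> (j + n) x - \<rho> n x\<bar> \<le> (\<Sum>k. increment (k + n) x)"
proof -
  have "\<bar>\<rho> (j + n) x - \<rho> n x\<bar> \<le> (\<Sum>k<j. increment (k + n) x)"
  proof (induction j)
    case (Suc j)
    have "\<bar>\<rho> (Suc j + n) x - \<rho> n x\<bar> \<le> \<bar>\<rho> (Suc (j + n)) x - \<rho> (j + n) x\<bar> + \<bar>\<rho> (j + n) x - \<rho> n x\<bar>"
      by simp
    also have "\<dots> \<le> increment (j + n) x + (\<Sum>k<j. increment (k + n) x)"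
      using Suc.IH by (simp add: increment_def)
    finally show ?case by (simp add: add.commute)
  qed simp
  also have "\<dots> \<le> (\<Sum>k. increment (k + n) x)"
    using good_summable[OF assms]
    by (intro sum_le_suminf summable_ignore_initial_segment) (auto simp: increment_def)
  finally show ?thesis .
qed

lemma good_convergent: assumes "x \<in> good" shows "convergent (\<lambda>n. \<rho> n x)"
proof -
  have "summable (\<lambda>k. \<rho> (Suc k) x - \<rho> k x)"
    using good_summable[OF assms] unfolding increment_def by (rule summable_rabs_cancel)
  then have "(\<lambda>n. \<rho> 0 x + (\<Sum>k<n. \<rho> (Suc k) x - \<rho> k x)) \<longlonglongrightarrow> \<rho> 0 x + (\<Sum>k. \<rho> (Suc k) x - \<rho> k x)"
    by (intro tendsto_add tendsto_const summable_LIMSEQ)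
  moreover have "(\<lambda>n. \<rho> 0 x + (\<Sum>k<n. \<rho> (Suc k) x - \<rho> k x)) = (\<lambda>n. \<rho> n x)"
    by (rule ext) (simp add: sum_lessThan_telescope[where f="\<lambda>k. \<rho> k x"])
  ultimately show ?thesis unfolding convergent_def by auto
qed

definition version :: "nat \<Rightarrow> real \<Rightarrow> real" where
  "version n x = (if x \<in> good then \<rho> n x else 0)"

definition limit :: "real \<Rightarrow> real" where
  "limit x = lim (\<lambda>n. version n x)"

lemma version_measurable[measurable]: "version n \<in> borel_measurable borel"
  unfolding version_def[abs_def] by measurable

lemma version_nonneg: "0 \<le> version n x"
  unfolding version_def by (simp add: nonneg)

lemma version_AE_eq: "AE x in lborel. version n x = \<rho> n x"
  using AE_good by (rule AE_mp) (simp add: version_def)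

lemma version_integrable: "integrable lborel (version n)"
  using integrable_cong_AE[of "version n" lborel "\<rho> n"] version_AE_eq integrable by simp

lemma version_tendsto: "(\<lambda>n. version n x) \<longlonglongrightarrow> limit x"
proof (cases "x \<in> good")
  case True
  then have "convergent (\<lambda>n. version n x)" using good_convergent by (simp add: version_def)
  then show ?thesis unfolding limit_def by (simp add: convergent_LIMSEQ_iff)
next
  case False
  then show ?thesis unfolding limit_def version_def by simp
qed

lemma limit_measurable[measurable]: "limit \<in> borel_measurable borel"
  by (rule borel_measurable_LIMSEQ_metric[OF version_measurable version_tendsto])

lemma limit_nonneg: "0 \<le> limit x"
  by (rule LIMSEQ_le_const[OF version_tendsto]) (auto simp: version_nonneg)

lemma limit_distance_le_increments: "ennreal \<bar>limit x - version n x\<bar> \<le> (\<Sum>k. ennreal (increment (k + n) x))"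
proof (cases "x \<in> good")
  case True
  have "(\<lambda>j. version (j + n) x) \<longlonglongrightarrow> limit x" by (rule LIMSEQ_ignore_initial_segment[OF version_tendsto])
  then have "(\<lambda>j. \<bar>\<rho> (j + n) x - \<rho> n x\<bar>) \<longlonglongrightarrow> \<bar>limit x - \<rho> n x\<bar>"
    using True by (intro tendsto_rabs tendsto_diff tendsto_const) (simp add: version_def)
  then have "\<bar>limit x - \<rho> n x\<bar> \<le> (\<Sum>k. increment (k + n) x)"
    by (rule LIMSEQ_le_const2) (use good_tail_bound[OF True] in auto)
  moreover have "(\<Sum>k. ennreal (increment (k + n) x)) = ennreal (\<Sum>k. increment (k + n) x)"
    using good_summable[OF True]
    by (intro suminf_ennreal2 summable_ignore_initial_segment) (auto simp: increment_def)
  ultimately show ?thesis using True by (simp add: version_def ennreal_leI)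
next
  case False
  then show ?thesis unfolding limit_def version_def by simp
qed

lemma nn_integral_limit_distance: "(\<integral>\<^sup>+x. ennreal \<bar>limit x - version n x\<bar> \<partial>lborel) \<le> ennreal (tail n)"
proof -
  have "(\<integral>\<^sup>+x. ennreal \<bar>limit x - version n x\<bar> \<partial>lborel) \<le> (\<integral>\<^sup>+x. (\<Sum>k. ennreal (increment (k + n) x)) \<partial>lborel)"
    by (intro nn_integral_mono limit_distance_le_increments)
  then show ?thesis by (simp add: nn_integral_tail)
qed

lemma limit_integrable: "integrable lborel limit"
proof -
  have "integrable lborel (\<lambda>x. limit x - version 0 x)"
  proof (rule integrableI_bounded)
    show "(\<integral>\<^sup>+x. ennreal (norm (limit x - version 0 x)) \<partial>lborel) < \<infinity>"
      using nn_integral_limit_distance[of 0] by (simp add: le_less_trans)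
  qed simp
  from Bochner_Integration.integrable_add[OF this version_integrable[of 0]] show ?thesis by simp
qed

lemma L1_distance_le_tail: "(\<integral>x. \<bar>limit x - version n x\<bar> \<partial>lborel) \<le> tail n"
proof -
  have "ennreal (\<integral>x. \<bar>limit x - version n x\<bar> \<partial>lborel) = (\<integral>\<^sup>+x. ennreal \<bar>limit x - version n x\<bar> \<partial>lborel)"
    using limit_integrable version_integrable by (intro nn_integral_eq_integral[symmetric]) auto
  also have "\<dots> \<le> ennreal (tail n)" by (rule nn_integral_limit_distance)
  finally show ?thesis using tail_nonneg by (simp add: ennreal_le_iff)
qed

lemma L1_tendsto: "(\<lambda>n. \<integral>x. \<bar>limit x - version n x\<bar> \<partial>lborel) \<longlonglongrightarrow> 0"
proof (rule Lim_null_comparison[OF _ tail_tendsto_0])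
  show "\<forall>\<^sub>F n in sequentially. norm (\<integral>x. \<bar>limit x - version n x\<bar> \<partial>lborel) \<le> tail n"
    using L1_distance_le_tail by simp
qed

end

lemma prob_space_Exp1: "prob_space Exp1"
  unfolding Exp1_def by (rule prob_space_exponential_density) simp

lemma sets_Exp1[simp, measurable_cong]: "sets Exp1 = sets borel"
  unfolding Exp1_def by simp

lemma space_Exp1[simp]: "space Exp1 = UNIV"
  unfolding Exp1_def by simp

lemma emeasure_Exp1: "A \<in> sets borel \<Longrightarrow>
  emeasure Exp1 A = (\<integral>\<^sup>+x. ennreal (exponential_density 1 x) * indicator A x \<partial>lborel)"
  unfolding Exp1_def by (simp add: emeasure_density)

lemma Exp1_null: "A \<in> null_sets lborel \<Longrightarrow> emeasure Exp1 A = 0"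
  using nn_integral_null_set[of A lborel] by (auto simp: emeasure_Exp1)

lemma Exp1_negative: "emeasure Exp1 {x. x < 0} = 0"
proof -
  have "emeasure Exp1 {x. x < 0} = (\<integral>\<^sup>+x. ennreal (exponential_density 1 x) * indicator {x. x<0} x \<partial>lborel)"
    by (rule emeasure_Exp1) simp
  also have "\<dots> = (\<integral>\<^sup>+(x::real). 0 \<partial>lborel)"
    by (intro nn_integral_cong) (simp add: exponential_density_def indicator_def)
  finally show ?thesis by simp
qed

lemma Exp1_lower_bound:
  assumes C: "C \<in> sets borel" "C \<subseteq> {0..b}"
  shows "ennreal (exp (-b)) * emeasure lborel C \<le> emeasure Exp1 C"
proof -
  have "ennreal (exp (-b)) * emeasure lborel C = (\<integral>\<^sup>+x. ennreal (exp (-b)) * indicator C x \<partial>lborel)"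
    using C by (simp add: nn_integral_cmult_indicator)
  also have "\<dots> \<le> (\<integral>\<^sup>+x. ennreal (exponential_density 1 x) * indicator C x \<partial>lborel)"
    using C by (intro nn_integral_mono) (auto simp: indicator_def exponential_density_def intro!: ennreal_leI)
  also have "\<dots> = emeasure Exp1 C" using C by (simp add: emeasure_Exp1)
  finally show ?thesis .
qed

lemma emeasure_lborel_translate:
  "A \<in> sets borel \<Longrightarrow> emeasure lborel {y::real. c + y \<in> A} = emeasure lborel A"
  using emeasure_distr[of "(+) c" lborel borel A] by (simp add: lborel_distr_plus vimage_def)

lemma emeasure_lborel_reflect:
  "A \<in> sets borel \<Longrightarrow> emeasure lborel {y::real. - y \<in> A} = emeasure lborel A"
  using emeasure_distr[of uminus lborel borel A] by (simp add: lborel_distr_uminus vimage_def)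

definition Exp1_cube :: "(real \<times> real \<times> real) measure" where
  "Exp1_cube = Exp1 \<Otimes>\<^sub>M (Exp1 \<Otimes>\<^sub>M Exp1)"

lemma prob_space_Exp1_cube: "prob_space Exp1_cube"
  unfolding Exp1_cube_def using prob_space_Exp1 by (intro prob_space_pair) (auto intro: prob_space_pair)

lemma sets_Exp1_cube[measurable_cong]: "sets Exp1_cube = sets (borel \<Otimes>\<^sub>M (borel \<Otimes>\<^sub>M borel))"
  unfolding Exp1_cube_def by (intro sets_pair_measure_cong) (auto intro!: sets_pair_measure_cong)

lemma space_Exp1_cube[simp]: "space Exp1_cube = UNIV"
  unfolding Exp1_cube_def by (simp add: space_pair_measure)

lemma sigma_finite_Exp1_square: "sigma_finite_measure (Exp1 \<Otimes>\<^sub>M Exp1)"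
  using prob_space_Exp1 by (intro prob_space_imp_sigma_finite prob_space_pair)

lemma emeasure_Exp1_square_Times:
  "A \<in> sets borel \<Longrightarrow> B \<in> sets borel \<Longrightarrow> emeasure (Exp1 \<Otimes>\<^sub>M Exp1) (A \<times> B) = emeasure Exp1 A * emeasure Exp1 B"
  using prob_space_Exp1 by (intro sigma_finite_measure.emeasure_pair_measure_Times prob_space_imp_sigma_finite) auto

lemma emeasure_Exp1_cube_sections: "S \<in> sets Exp1_cube \<Longrightarrow>
  emeasure Exp1_cube S = (\<integral>\<^sup>+x. emeasure (Exp1 \<Otimes>\<^sub>M Exp1) (Pair x -` S) \<partial>Exp1)"
  unfolding Exp1_cube_def
  by (rule sigma_finite_measure.emeasure_pair_measure_alt[OF sigma_finite_Exp1_square]) (simp add: Exp1_cube_def)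

lemma emeasure_Exp1_cube_third:
  assumes "C \<in> sets borel" shows "emeasure Exp1_cube (UNIV \<times> UNIV \<times> C) = emeasure Exp1 C"
proof -
  have "emeasure Exp1_cube (UNIV \<times> UNIV \<times> C) = emeasure Exp1 UNIV * emeasure (Exp1 \<Otimes>\<^sub>M Exp1) (UNIV \<times> C)"
    unfolding Exp1_cube_def using assms
    by (intro sigma_finite_measure.emeasure_pair_measure_Times[OF sigma_finite_Exp1_square]) auto
  also have "\<dots> = emeasure Exp1 C" using assms prob_space_Exp1
    by (simp add: emeasure_Exp1_square_Times prob_space.emeasure_space_1[of Exp1, simplified])
  finally show ?thesis .
qed

lemma sets_Exp1_cube_pred:
  assumes "(\<lambda>(x,y,z). f x y z) \<in> borel_measurable Exp1_cube" "A \<in> sets borel"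
  shows "{(x, y, z). f x y z \<in> A} \<in> sets Exp1_cube"
proof -
  have "{(x, y, z). f x y z \<in> A} = (\<lambda>(x,y,z). f x y z) -` A \<inter> space Exp1_cube" by auto
  then show ?thesis using measurable_sets[OF assms(1)] assms(2) by simp
qed

lemma ladder_step_measurable[measurable]:
  "(\<lambda>(x, y, z). ladder_step d x y z) \<in> borel_measurable Exp1_cube"
  "(\<lambda>(d, x, y, z). ladder_step d x y z) \<in> borel_measurable (borel \<Otimes>\<^sub>M Exp1_cube)"
  by (simp_all add: ladder_step_def measurable_cong_sets[OF sets_Exp1_cube refl] case_prod_beta')

lemma ladder_kernel_Exp1_cube: "ladder_kernel d = distr Exp1_cube borel (\<lambda>(x, y, z). ladder_step d x y z)"
  unfolding ladder_kernel_def Exp1_cube_def by simp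

lemma sets_ladder_kernel[simp, measurable_cong]: "sets (ladder_kernel d) = sets borel"
  by (simp add: ladder_kernel_Exp1_cube)

lemma prob_space_ladder_kernel: "prob_space (ladder_kernel d)"
  unfolding ladder_kernel_Exp1_cube using prob_space_Exp1_cube
  by (intro prob_space.prob_space_distr) (auto simp: ladder_step_def)

lemma emeasure_ladder_kernel: "A \<in> sets borel \<Longrightarrow>
   emeasure (ladder_kernel d) A = emeasure Exp1_cube {(x, y, z). ladder_step d x y z \<in> A}"
  unfolding ladder_kernel_Exp1_cube
  by (subst emeasure_distr) (auto simp: ladder_step_def intro!: arg_cong[where f="emeasure Exp1_cube"])

lemma ladder_kernel_measurable[measurable]: "ladder_kernel \<in> measurable borel (subprob_algebra borel)"
proof -
  have "(\<lambda>d. distr Exp1_cube borel (\<lambda>(x, y, z). ladder_step d x y z)) \<in> measurable borel (subprob_algebra borel)"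
  proof (rule measurable_distr2[where M=Exp1_cube and g="\<lambda>_. Exp1_cube"])
    show "(\<lambda>(d, v). case v of (x, y, z) \<Rightarrow> ladder_step d x y z) \<in> measurable (borel \<Otimes>\<^sub>M Exp1_cube) borel"
      using ladder_step_measurable(2) by (simp add: case_prod_beta')
    show "(\<lambda>_. Exp1_cube) \<in> measurable borel (subprob_algebra Exp1_cube)"
      using prob_space_Exp1_cube
      by (intro measurable_const) (auto simp: space_subprob_algebra prob_space_imp_subprob_space)
  qed
  then show ?thesis by (simp add: ladder_kernel_Exp1_cube[abs_def])
qed

lemma ladder_step_cases:
  "0 \<le> z \<Longrightarrow> ladder_step d x y z = z \<or> ladder_step d x y z = - z \<or> ladder_step d x y z = d + y - x"
  unfolding ladder_step_def by (auto simp: min_def)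

lemma ladder_step_abs_le: "0 \<le> z \<Longrightarrow> \<bar>ladder_step d x y z\<bar> \<le> z"
  unfolding ladder_step_def by (auto simp: min_def)

lemma ladder_step_increment: "\<bar>d + y - x\<bar> < z \<Longrightarrow> ladder_step d x y z = d + y - x"
  unfolding ladder_step_def by (auto simp: min_def)

section \<open>Absolute continuity of the kernel\<close>

lemma null_sets_Exp1_cube_third: "C \<in> null_sets Exp1 \<Longrightarrow> UNIV \<times> UNIV \<times> C \<in> null_sets Exp1_cube"
  using emeasure_Exp1_cube_third[of C] by (auto simp: null_sets_def Exp1_cube_def)

text \<open>For a Lebesgue null set A, the increment d + Y - X lies in A with probability 0:
  for each fixed X the Y-section is a translate of A.\<close>

lemma increment_null:
  assumes A: "A \<in> null_sets lborel"
  shows "{(x, y, z::real). d + y - x \<in> A} \<in> null_sets Exp1_cube"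
proof -
  let ?S = "{(x, y, z::real). d + y - x \<in> A}"
  have Ab: "A \<in> sets borel" using A by auto
  have S: "?S \<in> sets Exp1_cube"
    by (rule sets_Exp1_cube_pred[OF _ Ab]) (simp add: measurable_cong_sets[OF sets_Exp1_cube refl] case_prod_beta')
  have "emeasure Exp1_cube ?S = (\<integral>\<^sup>+x. emeasure (Exp1 \<Otimes>\<^sub>M Exp1) (Pair x -` ?S) \<partial>Exp1)"
    by (rule emeasure_Exp1_cube_sections[OF S])
  also have "\<dots> = (\<integral>\<^sup>+x. 0 \<partial>Exp1)"
  proof (rule nn_integral_cong)
    fix x
    have slice: "Pair x -` ?S = {y. (d - x) + y \<in> A} \<times> UNIV" by (auto simp: algebra_simps)
    have ms: "{y. (d - x) + y \<in> A} \<in> sets borel"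
      using measurable_sets[of "\<lambda>y. (d - x) + y" borel borel A] Ab by (simp add: vimage_def)
    have "{y. (d - x) + y \<in> A} \<in> null_sets lborel"
      using emeasure_lborel_translate[OF Ab, of "d - x"] A ms by (auto simp: null_sets_def)
    then show "emeasure (Exp1 \<Otimes>\<^sub>M Exp1) (Pair x -` ?S) = 0"
      unfolding slice using ms by (simp add: emeasure_Exp1_square_Times Exp1_null)
  qed
  finally show ?thesis using S by (auto simp: null_sets_def)
qed

text \<open>Each K d is absolutely continuous: the step is Z, -Z or the increment d + Y - X.\<close>

lemma ladder_kernel_null:
  assumes A: "A \<in> null_sets lborel" shows "emeasure (ladder_kernel d) A = 0"
proof -
  have Ab: "A \<in> sets borel" using A by auto
  let ?S = "{(x, y, z). ladder_step d x y z \<in> A}"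
  have S: "?S \<in> sets Exp1_cube" by (rule sets_Exp1_cube_pred[OF ladder_step_measurable(1) Ab])
  have "{y. - y \<in> A} \<in> null_sets lborel"
    using emeasure_lborel_reflect[OF Ab] A Ab by (auto simp: null_sets_def)
  then have "A \<in> null_sets Exp1" "{y. - y \<in> A} \<in> null_sets Exp1" "{z. z < 0} \<in> null_sets Exp1"
    using A Exp1_null Exp1_negative by (auto simp: null_sets_def)
  note nulls = this[THEN null_sets_Exp1_cube_third]
  have "?S \<subseteq> (UNIV \<times> UNIV \<times> A) \<union> (UNIV \<times> UNIV \<times> {y. - y \<in> A})
      \<union> {(x, y, z). d + y - x \<in> A} \<union> (UNIV \<times> UNIV \<times> {z. z < 0})"
  proof
    fix v assume "v \<in> ?S"
    then obtain x y z where "v = (x, y, z)" "ladder_step d x y z \<in> A" by auto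
    then show "v \<in> (UNIV \<times> UNIV \<times> A) \<union> (UNIV \<times> UNIV \<times> {y. - y \<in> A})
      \<union> {(x, y, z). d + y - x \<in> A} \<union> (UNIV \<times> UNIV \<times> {z. z < 0})"
      using ladder_step_cases[of z d x y] by (cases "z < 0") auto
  qed
  then have "?S \<in> null_sets Exp1_cube"
    by (rule null_sets_subset[rotated, OF S]) (intro null_sets.Un nulls increment_null[OF A])
  then show ?thesis by (simp add: emeasure_ladder_kernel[OF Ab] null_sets_def)
qed

lemma ladder_kernel_measurable_on: "sets P = sets borel \<Longrightarrow> ladder_kernel \<in> measurable P (subprob_algebra borel)"
  using ladder_kernel_measurable measurable_cong_sets by blast

lemma sets_bind_ladder_kernel[simp]: "sets P = sets borel \<Longrightarrow> sets (P \<bind> ladder_kernel) = sets borel"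
  by (rule sets_bind) (auto simp: space_eq_UNIV_of_sets_borel)

lemma emeasure_bind_ladder_kernel: "sets P = sets borel \<Longrightarrow> A \<in> sets borel \<Longrightarrow>
   emeasure (P \<bind> ladder_kernel) A = (\<integral>\<^sup>+d. emeasure (ladder_kernel d) A \<partial>P)"
  by (rule emeasure_bind[OF _ ladder_kernel_measurable_on]) (auto simp: space_eq_UNIV_of_sets_borel)

lemma prob_space_bind_ladder_kernel: "prob_space P \<Longrightarrow> sets P = sets borel \<Longrightarrow> prob_space (P \<bind> ladder_kernel)"
  by (rule prob_space.prob_space_bind[OF _ _ ladder_kernel_measurable_on]) (auto simp: prob_space_ladder_kernel)

lemma absolutely_continuous_bind_ladder_kernel:
  assumes "sets P = sets borel" shows "absolutely_continuous lborel (P \<bind> ladder_kernel)"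
  unfolding absolutely_continuous_def
proof
  fix A :: "real set" assume A: "A \<in> null_sets lborel"
  then have Ab: "A \<in> sets borel" by auto
  have "emeasure (P \<bind> ladder_kernel) A = (\<integral>\<^sup>+d. emeasure (ladder_kernel d) A \<partial>P)"
    using assms Ab by (simp add: emeasure_bind_ladder_kernel)
  also have "\<dots> = 0" using ladder_kernel_null[OF A] by simp
  finally show "A \<in> null_sets (P \<bind> ladder_kernel)" using assms Ab by (auto simp: null_sets_def)
qed

definition ladder_kernel2 :: "real \<Rightarrow> real measure" where
  "ladder_kernel2 d = ladder_kernel d \<bind> ladder_kernel"

lemma sets_ladder_kernel2[simp, measurable_cong]: "sets (ladder_kernel2 d) = sets borel"
  unfolding ladder_kernel2_def by simp

lemma prob_space_ladder_kernel2: "prob_space (ladder_kernel2 d)"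
  unfolding ladder_kernel2_def by (rule prob_space_bind_ladder_kernel[OF prob_space_ladder_kernel]) simp

lemma ladder_kernel2_measurable[measurable]: "ladder_kernel2 \<in> measurable borel (subprob_algebra borel)"
  unfolding ladder_kernel2_def[abs_def]
  by (rule measurable_bind2[OF ladder_kernel_measurable ladder_kernel_measurable])

lemma bind_ladder_kernel_twice: "sets P = sets borel \<Longrightarrow> P \<bind> ladder_kernel \<bind> ladder_kernel = P \<bind> ladder_kernel2"
  unfolding ladder_kernel2_def by (rule bind_assoc[OF ladder_kernel_measurable_on ladder_kernel_measurable])

section \<open>Minorization of the two-step kernel\<close>

text \<open>Since the step is bounded by Z, one step lands in [-1,1] with probability at least e^-1.\<close>

lemma ladder_kernel_unit_interval: "ennreal (exp (-1)) \<le> emeasure (ladder_kernel d) {-1..1}"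
proof -
  have "ennreal (exp (-1)) = ennreal (exp (-1)) * emeasure lborel {0..1::real}" by simp
  also have "\<dots> \<le> emeasure Exp1 {0..1}" by (rule Exp1_lower_bound) auto
  also have "\<dots> = emeasure Exp1_cube (UNIV \<times> UNIV \<times> {0..1})" by (simp add: emeasure_Exp1_cube_third)
  also have "\<dots> \<le> emeasure Exp1_cube {(x, y, z). ladder_step d x y z \<in> {-1..1}}"
  proof (rule emeasure_mono)
    show "UNIV \<times> UNIV \<times> {0..1} \<subseteq> {(x, y, z). ladder_step d x y z \<in> {-1..1}}"
    proof safe
      fix x y z :: real assume "z \<in> {0..1}"
      then have "\<bar>ladder_step d x y z\<bar> \<le> 1" using ladder_step_abs_le[of z d x y] by auto
      then show "ladder_step d x y z \<in> {-1..1}" by auto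
    qed
    show "{(x, y, z). ladder_step d x y z \<in> {-1..1}} \<in> sets Exp1_cube"
      by (rule sets_Exp1_cube_pred[OF ladder_step_measurable(1)]) simp
  qed
  also have "\<dots> = emeasure (ladder_kernel d) {-1..1}" by (simp add: emeasure_ladder_kernel)
  finally show ?thesis .
qed

lemma increment_lower_bound:
  assumes d: "\<bar>d\<bar> \<le> 1" and x: "x \<in> {2..3}" and B: "B \<in> sets borel" "B \<subseteq> {-1..1}"
  shows "ennreal (exp (-5)) * emeasure lborel B \<le> emeasure Exp1 {y. (d - x) + y \<in> B}"
proof -
  have "ennreal (exp (-5)) * emeasure lborel B = ennreal (exp (-5)) * emeasure lborel {y. (d - x) + y \<in> B}"
    by (simp add: emeasure_lborel_translate[OF B(1)])
  also have "\<dots> \<le> emeasure Exp1 {y. (d - x) + y \<in> B}"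
  proof (rule Exp1_lower_bound)
    show "{y. (d - x) + y \<in> B} \<in> sets borel"
      using measurable_sets[of "\<lambda>y. (d - x) + y" borel borel B] B by (simp add: vimage_def)
    show "{y. (d - x) + y \<in> B} \<subseteq> {0..5}" using B d x by force
  qed
  finally show ?thesis .
qed

lemma increment_event_lower_bound:
  assumes d: "\<bar>d\<bar> \<le> 1" and B: "B \<in> sets borel" "B \<subseteq> {-1..1}"
  defines "T \<equiv> {(x, y, z::real). x \<in> {2..3} \<and> z \<in> {2..3} \<and> d + y - x \<in> B}"
  shows "T \<in> sets Exp1_cube" and "ennreal (exp (-11)) * emeasure lborel B \<le> emeasure Exp1_cube T"
proof -
  have "T = ({2..3} \<times> UNIV \<times> {2..3}) \<inter> {(x, y, z::real). d + y - x \<in> B}" unfolding T_def by auto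
  moreover have "{(x, y, z::real). d + y - x \<in> B} \<in> sets Exp1_cube"
    by (rule sets_Exp1_cube_pred[OF _ B(1)]) (simp add: measurable_cong_sets[OF sets_Exp1_cube refl] case_prod_beta')
  moreover have "{2..3} \<times> UNIV \<times> {2..3::real} \<in> sets Exp1_cube" by (simp add: Exp1_cube_def)
  ultimately show T: "T \<in> sets Exp1_cube" by simp
  let ?c = "ennreal (exp (-5)) * emeasure lborel B * ennreal (exp (-3))"
  have "ennreal (exp (-11)) = ennreal (exp (-3)) * ennreal (exp (-5)) * ennreal (exp (-3))"
    by (simp add: exp_add[symmetric] flip: ennreal_mult)
  then have "ennreal (exp (-11)) * emeasure lborel B = ennreal (exp (-3)) * emeasure lborel {2..3::real} * ?c"
    by (simp add: mult_ac)
  also have "\<dots> \<le> emeasure Exp1 {2..3} * ?c"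
    by (intro mult_right_mono Exp1_lower_bound) auto
  also have "\<dots> = (\<integral>\<^sup>+x. ?c * indicator {2..3} x \<partial>Exp1)"
    using nn_integral_cmult_indicator[of "{2..3}" Exp1 ?c] by (simp add: mult.commute)
  also have "\<dots> \<le> (\<integral>\<^sup>+x. emeasure (Exp1 \<Otimes>\<^sub>M Exp1) (Pair x -` T) \<partial>Exp1)"
  proof (rule nn_integral_mono)
    fix x
    show "?c * indicator {2..3} x \<le> emeasure (Exp1 \<Otimes>\<^sub>M Exp1) (Pair x -` T)"
    proof (cases "x \<in> {2..3}")
      case True
      have ms: "{y. (d - x) + y \<in> B} \<in> sets borel"
        using measurable_sets[of "\<lambda>y. (d - x) + y" borel borel B] B by (simp add: vimage_def)
      have slice: "Pair x -` T = {y. (d - x) + y \<in> B} \<times> {2..3}"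
        using True by (auto simp: T_def algebra_simps)
      have "?c \<le> emeasure Exp1 {y. (d - x) + y \<in> B} * emeasure Exp1 {2..3}"
        using increment_lower_bound[OF d True B] Exp1_lower_bound[of "{2..3}" 3]
        by (intro mult_mono) (auto simp: mult.commute)
      also have "\<dots> = emeasure (Exp1 \<Otimes>\<^sub>M Exp1) (Pair x -` T)"
        unfolding slice using ms by (simp add: emeasure_Exp1_square_Times)
      finally show ?thesis using True by simp
    qed simp
  qed
  also have "\<dots> = emeasure Exp1_cube T" by (rule emeasure_Exp1_cube_sections[OF T, symmetric])
  finally show "ennreal (exp (-11)) * emeasure lborel B \<le> emeasure Exp1_cube T" .
qed

text \<open>From a state in [-1,1], on that event the step equals the increment, so one step has
  density at least e^-11 on [-1,1].\<close>

lemma ladder_kernel_lower_bound: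
  assumes d: "\<bar>d\<bar> \<le> 1" and B: "B \<in> sets borel" "B \<subseteq> {-1..1}"
  shows "ennreal (exp (-11)) * emeasure lborel B \<le> emeasure (ladder_kernel d) B"
proof -
  let ?T = "{(x, y, z::real). x \<in> {2..3} \<and> z \<in> {2..3} \<and> d + y - x \<in> B}"
  have "?T \<subseteq> {(x, y, z). ladder_step d x y z \<in> B}"
  proof safe
    fix x y z :: real assume "x \<in> {2..3}" "z \<in> {2..3}" "d + y - x \<in> B"
    moreover then have "\<bar>d + y - x\<bar> < z" using B by force
    ultimately show "ladder_step d x y z \<in> B" by (simp add: ladder_step_increment)
  qed
  then have "emeasure Exp1_cube ?T \<le> emeasure Exp1_cube {(x, y, z). ladder_step d x y z \<in> B}"
    by (rule emeasure_mono) (rule sets_Exp1_cube_pred[OF ladder_step_measurable(1) B(1)])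
  then show ?thesis
    using increment_event_lower_bound[OF d B] by (simp add: emeasure_ladder_kernel[OF B(1)])
qed

definition lebesgue_pm1 :: "real measure" where
  "lebesgue_pm1 = density lborel (indicator {-1..1})"

lemma sets_lebesgue_pm1[simp]: "sets lebesgue_pm1 = sets borel"
  unfolding lebesgue_pm1_def by simp

lemma emeasure_lebesgue_pm1: "A \<in> sets borel \<Longrightarrow> emeasure lebesgue_pm1 A = emeasure lborel (A \<inter> {-1..1})"
  unfolding lebesgue_pm1_def by (simp add: emeasure_density nn_integral_indicator Int_commute flip: indicator_inter_arith)

lemma finite_measure_lebesgue_pm1: "finite_measure lebesgue_pm1"
proof
  have "emeasure lebesgue_pm1 (space lebesgue_pm1) = 2"
    by (simp add: emeasure_lebesgue_pm1 space_eq_UNIV_of_sets_borel)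
  then show "emeasure lebesgue_pm1 (space lebesgue_pm1) \<noteq> \<infinity>" by simp
qed

lemma measure_lebesgue_pm1_UNIV: "measure lebesgue_pm1 UNIV = 2"
  by (simp add: measure_def emeasure_lebesgue_pm1)

text \<open>The first step lands in [-1,1] with probability at least e^-1, the second then has density
  at least e^-11 on [-1,1].\<close>

lemma ladder_kernel2_minorization:
  assumes B: "B \<in> sets borel"
  shows "exp (-12) * measure lebesgue_pm1 B \<le> measure (ladder_kernel2 d) B"
proof -
  let ?c = "ennreal (exp (-11)) * emeasure lborel (B \<inter> {-1..1})"
  have "ennreal (exp (-12)) = ennreal (exp (-1)) * ennreal (exp (-11))"
    by (simp add: exp_add[symmetric] flip: ennreal_mult)
  moreover have "ennreal (measure lebesgue_pm1 B) = emeasure lborel (B \<inter> {-1..1})"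
    using finite_measure.emeasure_eq_measure[OF finite_measure_lebesgue_pm1, of B] B
    by (simp add: emeasure_lebesgue_pm1)
  ultimately have "ennreal (exp (-12) * measure lebesgue_pm1 B) = ennreal (exp (-1)) * ?c"
    by (simp add: ennreal_mult mult.assoc)
  also have "\<dots> \<le> emeasure (ladder_kernel d) {-1..1} * ?c"
    by (intro mult_right_mono ladder_kernel_unit_interval) simp
  also have "\<dots> = (\<integral>\<^sup>+e. ?c * indicator {-1..1} e \<partial>ladder_kernel d)"
    using nn_integral_cmult_indicator[of "{-1..1}" "ladder_kernel d" ?c] by (simp add: mult.commute)
  also have "\<dots> \<le> (\<integral>\<^sup>+e. emeasure (ladder_kernel e) B \<partial>ladder_kernel d)"
  proof (rule nn_integral_mono)
    fix e :: real
    show "?c * indicator {-1..1} e \<le> emeasure (ladder_kernel e) B"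
    proof (cases "e \<in> {-1..1}")
      case True
      then have "?c \<le> emeasure (ladder_kernel e) (B \<inter> {-1..1})"
        using B by (intro ladder_kernel_lower_bound) auto
      also have "\<dots> \<le> emeasure (ladder_kernel e) B" using B by (intro emeasure_mono) auto
      finally show ?thesis using True by simp
    qed simp
  qed
  also have "\<dots> = emeasure (ladder_kernel2 d) B"
    unfolding ladder_kernel2_def using B by (simp add: emeasure_bind_ladder_kernel)
  also have "\<dots> = ennreal (measure (ladder_kernel2 d) B)"
    using finite_measure.emeasure_eq_measure[OF prob_space.finite_measure[OF prob_space_ladder_kernel2]] .
  finally show ?thesis by (subst (asm) ennreal_le_iff) auto
qed

section \<open>Contraction of the two-step kernel and uniqueness of the stationary law\<close>

definition ladder_contraction :: real where
  "ladder_contraction = 1 - 2 * exp (-12)"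

lemma ladder_contraction_bounds: "0 \<le> ladder_contraction" "ladder_contraction < 1"
proof -
  have "exp (-12::real) \<le> exp (-1)" by simp
  also have "exp (-1::real) \<le> 1/2" using exp_ge_add_one_self[of 1] by (simp add: exp_minus field_simps)
  finally show "0 \<le> ladder_contraction" unfolding ladder_contraction_def by simp
  show "ladder_contraction < 1" unfolding ladder_contraction_def by simp
qed

lemma ladder_kernel2_L1_contraction:
  assumes f: "f \<in> borel_measurable borel" "\<And>x. 0 \<le> f x" "integrable lborel f"
    and g: "g \<in> borel_measurable borel" "\<And>x. 0 \<le> g x" "integrable lborel g"
    and mass: "(\<integral>x. f x \<partial>lborel) = (\<integral>x. g x \<partial>lborel)"
    and p: "p \<in> borel_measurable borel" "\<And>x. 0 \<le> p x" "integrable lborel p"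
      "density lborel (\<lambda>x. ennreal (f x)) \<bind> ladder_kernel2 = density lborel (\<lambda>x. ennreal (p x))"
    and q: "q \<in> borel_measurable borel" "\<And>x. 0 \<le> q x" "integrable lborel q"
      "density lborel (\<lambda>x. ennreal (g x)) \<bind> ladder_kernel2 = density lborel (\<lambda>x. ennreal (q x))"
  shows "(\<integral>x. \<bar>p x - q x\<bar> \<partial>lborel) \<le> ladder_contraction * (\<integral>x. \<bar>f x - g x\<bar> \<partial>lborel)"
  using doeblin_L1_contraction[OF ladder_kernel2_measurable prob_space_ladder_kernel2
      finite_measure_lebesgue_pm1 sets_lebesgue_pm1 ladder_kernel2_minorization _ f g mass p q]
  by (simp add: measure_lebesgue_pm1_UNIV ladder_contraction_def mult.commute)

text \<open>A stationary law is a fixed point of K, hence has a density.\<close>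

lemma stationary_bind_ladder_kernel:
  assumes "ladder_stationary P" shows "P \<bind> ladder_kernel = P"
proof (rule measure_eqI)
  have P: "sets P = sets borel" using assms by (auto simp: ladder_stationary_def)
  then show "sets (P \<bind> ladder_kernel) = sets P" by simp
  fix A assume "A \<in> sets (P \<bind> ladder_kernel)"
  then show "emeasure (P \<bind> ladder_kernel) A = emeasure P A"
    using assms P by (simp add: emeasure_bind_ladder_kernel ladder_stationary_def)
qed

lemma stationary_has_density:
  assumes "ladder_stationary P"
  shows "\<exists>f. f \<in> borel_measurable borel \<and> (\<forall>x. 0 \<le> f x) \<and> P = density lborel (\<lambda>x. ennreal (f x))"
proof -
  have P: "sets P = sets borel" "prob_space P" using assms by (auto simp: ladder_stationary_def)
  have "absolutely_continuous lborel P"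
    using absolutely_continuous_bind_ladder_kernel[OF P(1)] stationary_bind_ladder_kernel[OF assms] by simp
  then show ?thesis using density_of_absolutely_continuous P by blast
qed

text \<open>Two stationary laws are fixed by the two-step kernel, which strictly contracts their
  L1 distance; so their densities agree almost everywhere.\<close>

lemma stationary_unique:
  assumes P1: "ladder_stationary P1" and P2: "ladder_stationary P2" shows "P1 = P2"
proof -
  obtain f where f: "f \<in> borel_measurable borel" "\<forall>x. 0 \<le> f x" "P1 = density lborel (\<lambda>x. ennreal (f x))"
    using stationary_has_density[OF P1] by blast
  obtain g where g: "g \<in> borel_measurable borel" "\<forall>x. 0 \<le> g x" "P2 = density lborel (\<lambda>x. ennreal (g x))"
    using stationary_has_density[OF P2] by blast
  have fixed: "P \<bind> ladder_kernel2 = P" if "ladder_stationary P" for P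
    using that bind_ladder_kernel_twice[of P] stationary_bind_ladder_kernel[OF that]
    by (simp add: ladder_stationary_def)
  have fi: "integrable lborel f" "(\<integral>x. f x \<partial>lborel) = 1"
    using probability_density_integral[of f] f P1 by (auto simp: ladder_stationary_def)
  have gi: "integrable lborel g" "(\<integral>x. g x \<partial>lborel) = 1"
    using probability_density_integral[of g] g P2 by (auto simp: ladder_stationary_def)
  define I where "I = (\<integral>x. \<bar>f x - g x\<bar> \<partial>lborel)"
  have "I \<le> ladder_contraction * I"
    unfolding I_def using fixed[OF P1] fixed[OF P2] f g fi gi
    by (intro ladder_kernel2_L1_contraction) auto
  moreover have "0 \<le> I" unfolding I_def by simp
  ultimately have "I = 0"
    using ladder_contraction_bounds by (smt (verit) mult_less_cancel_right2)
  then have "AE x in lborel. \<bar>f x - g x\<bar> = 0"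
    using fi gi unfolding I_def by (subst integral_nonneg_eq_0_iff_AE[symmetric]) auto
  then have "density lborel (\<lambda>x. ennreal (f x)) = density lborel (\<lambda>x. ennreal (g x))"
    using f g by (intro density_cong) auto
  then show ?thesis using f g by simp
qed

lemma density_not_return:
  assumes f: "f \<in> borel_measurable borel"
  shows "density lborel (\<lambda>x. ennreal (f x)) \<noteq> return borel c"
proof
  assume eq: "density lborel (\<lambda>x. ennreal (f x)) = return borel c"
  have "emeasure (density lborel (\<lambda>x. ennreal (f x))) {c} = (\<integral>\<^sup>+x. ennreal (f x) * indicator {c} x \<partial>lborel)"
    using f by (simp add: emeasure_density)
  also have "\<dots> = 0" by (rule nn_integral_null_set) auto
  finally show False using eq by simp
qed

locale ladder_chain =
  fixes \<mu> :: "nat \<Rightarrow> real measure"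
  assumes prob_space_init: "prob_space (\<mu> 0)" and sets_init: "sets (\<mu> 0) = sets borel"
    and ac_init: "absolutely_continuous lborel (\<mu> 0)"
    and step: "\<And>n. \<mu> (Suc n) = \<mu> n \<bind> ladder_kernel"
begin

lemma sets_law[simp]: "sets (\<mu> n) = sets borel"
  by (induction n) (simp_all add: sets_init step)

lemma prob_space_law: "prob_space (\<mu> n)"
  by (induction n) (auto simp: prob_space_init step intro: prob_space_bind_ladder_kernel)

lemma law_has_density:
  "\<exists>\<rho>. \<rho> \<in> borel_measurable borel \<and> (\<forall>x. 0 \<le> \<rho> x) \<and> \<mu> n = density lborel (\<lambda>x. ennreal (\<rho> x))"
proof -
  have "absolutely_continuous lborel (\<mu> n)"
    by (cases n) (simp_all add: ac_init step absolutely_continuous_bind_ladder_kernel)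
  then show ?thesis using density_of_absolutely_continuous[OF prob_space_law sets_law] by blast
qed

definition dens :: "nat \<Rightarrow> real \<Rightarrow> real" where
  "dens n = (SOME \<rho>. \<rho> \<in> borel_measurable borel \<and> (\<forall>x. 0 \<le> \<rho> x) \<and> \<mu> n = density lborel (\<lambda>x. ennreal (\<rho> x)))"

lemma dens_measurable[measurable]: "dens n \<in> borel_measurable borel"
  and dens_nonneg: "0 \<le> dens n x"
  and law_dens: "\<mu> n = density lborel (\<lambda>x. ennreal (dens n x))"
  using someI_ex[OF law_has_density[of n]] unfolding dens_def[symmetric] by auto

lemma dens_integral: "integrable lborel (dens n)" "(\<integral>x. dens n x \<partial>lborel) = 1"
proof -
  have "prob_space (density lborel (\<lambda>x. ennreal (dens n x)))"
    using prob_space_law[of n] law_dens[of n] by metis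
  then show "integrable lborel (dens n)" "(\<integral>x. dens n x \<partial>lborel) = 1"
    using probability_density_integral[OF dens_measurable dens_nonneg] by auto
qed

lemma increment_decay:
  "(\<integral>x. \<bar>dens (Suc (Suc (Suc n))) x - dens (Suc (Suc n)) x\<bar> \<partial>lborel)
     \<le> ladder_contraction * (\<integral>x. \<bar>dens (Suc n) x - dens n x\<bar> \<partial>lborel)"
proof -
  have two_steps: "density lborel (\<lambda>x. ennreal (dens m x)) \<bind> ladder_kernel2
      = density lborel (\<lambda>x. ennreal (dens (Suc (Suc m)) x))" for m
  proof -
    have "\<mu> (Suc (Suc m)) = \<mu> m \<bind> ladder_kernel2"
      using bind_ladder_kernel_twice[OF sets_law[of m]] by (simp add: step)
    then show ?thesis by (metis law_dens)
  qed
  show ?thesis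
    by (rule ladder_kernel2_L1_contraction) (auto simp: dens_nonneg dens_integral two_steps)
qed

lemma increments_summable: "summable (\<lambda>n. \<integral>x. \<bar>dens (Suc n) x - dens n x\<bar> \<partial>lborel)"
proof (rule summable_two_step_decay[where B=2])
  show "(\<integral>x. \<bar>dens (Suc n) x - dens n x\<bar> \<partial>lborel) \<le> 2" for n
  proof -
    have "(\<integral>x. \<bar>dens (Suc n) x - dens n x\<bar> \<partial>lborel) \<le> (\<integral>x. dens (Suc n) x + dens n x \<partial>lborel)"
      using dens_integral(1)[of n] dens_integral(1)[of "Suc n"] dens_nonneg[of n] dens_nonneg[of "Suc n"]
      by (intro Bochner_Integration.integral_mono) (auto simp: abs_le_iff)
    also have "\<dots> = 2" using dens_integral[of n] dens_integral[of "Suc n"] by simp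
    finally show ?thesis .
  qed
qed (use increment_decay ladder_contraction_bounds in auto)

sublocale dens: summable_L1_increments dens
  using dens_nonneg dens_integral(1) increments_summable by unfold_locales auto

definition limit_law :: "real measure" where
  "limit_law = density lborel (\<lambda>x. ennreal (dens.limit x))"

lemma law_version: "\<mu> n = density lborel (\<lambda>x. ennreal (dens.version n x))"
proof -
  have "density lborel (\<lambda>x. ennreal (dens n x)) = density lborel (\<lambda>x. ennreal (dens.version n x))"
  proof (rule density_cong)
    show "AE x in lborel. ennreal (dens n x) = ennreal (dens.version n x)"
      using dens.version_AE_eq[of n] by (rule AE_mp) simp
  qed simp_all
  with law_dens[of n] show ?thesis by (rule trans)
qed

lemma measure_law: "A \<in> sets borel \<Longrightarrow> measure (\<mu> n) A = (\<integral>x. dens.version n x * indicator A x \<partial>lborel)"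
  using law_version[of n] measure_density_integral[OF dens.version_measurable dens.version_nonneg dens.version_integrable]
  by metis

lemma measure_limit_law: "A \<in> sets borel \<Longrightarrow> measure limit_law A = (\<integral>x. dens.limit x * indicator A x \<partial>lborel)"
  unfolding limit_law_def
  using measure_density_integral[OF dens.limit_measurable dens.limit_nonneg dens.limit_integrable] .

lemma measure_law_tendsto: "A \<in> sets borel \<Longrightarrow> (\<lambda>n. measure (\<mu> n) A) \<longlonglongrightarrow> measure limit_law A"
  unfolding measure_law measure_limit_law
  by (intro integral_test_tendsto dens.version_integrable dens.limit_integrable dens.L1_tendsto)
    (auto simp: indicator_def)

lemma prob_space_limit_law: "prob_space limit_law"
proof (rule prob_spaceI)
  have "(\<lambda>n. measure (\<mu> n) UNIV) \<longlonglongrightarrow> measure limit_law UNIV" by (rule measure_law_tendsto) simp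
  moreover have "measure (\<mu> n) UNIV = 1" for n
    using prob_space.prob_space[OF prob_space_law] by (simp add: space_eq_UNIV_of_sets_borel)
  ultimately have "measure limit_law UNIV = 1" by (simp add: LIMSEQ_const_iff)
  moreover have "emeasure limit_law UNIV = ennreal (\<integral>x. dens.limit x \<partial>lborel)"
    unfolding limit_law_def using dens.limit_integrable dens.limit_nonneg
    by (simp add: emeasure_density nn_integral_eq_integral)
  ultimately show "emeasure limit_law (space limit_law) = 1"
    using measure_limit_law[of UNIV] by (simp add: limit_law_def)
qed

text \<open>Passing to the limit on both sides of mu (n+1) = mu n bound with K.\<close>

lemma limit_law_fixed: "limit_law \<bind> ladder_kernel = limit_law"
proof -
  have P: "prob_space (limit_law \<bind> ladder_kernel)"
    using prob_space_limit_law by (rule prob_space_bind_ladder_kernel) (simp add: limit_law_def)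
  have "measure (limit_law \<bind> ladder_kernel) A = measure limit_law A" if A: "A \<in> sets borel" for A
  proof (rule LIMSEQ_unique)
    have k: "(\<lambda>d. measure (ladder_kernel d) A) \<in> borel_measurable borel"
      using A by (intro measurable_compose[OF ladder_kernel_measurable measurable_measure_subprob_algebra])
    have "measure (\<mu> (Suc n)) A = (\<integral>d. dens.version n d * measure (ladder_kernel d) A \<partial>lborel)" for n
      unfolding step by (subst law_version) (rule measure_density_bind[OF ladder_kernel_measurable prob_space_ladder_kernel
            dens.version_measurable dens.version_nonneg dens.version_integrable A])
    moreover have "(\<lambda>n. \<integral>d. dens.version n d * measure (ladder_kernel d) A \<partial>lborel)
        \<longlonglongrightarrow> (\<integral>d. dens.limit d * measure (ladder_kernel d) A \<partial>lborel)"
      using k prob_space.prob_le_1[OF prob_space_ladder_kernel]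
      by (intro integral_test_tendsto dens.version_integrable dens.limit_integrable dens.L1_tendsto) auto
    ultimately show "(\<lambda>n. measure (\<mu> (Suc n)) A) \<longlonglongrightarrow> measure (limit_law \<bind> ladder_kernel) A"
      unfolding limit_law_def
      by (simp add: measure_density_bind[OF ladder_kernel_measurable prob_space_ladder_kernel
            dens.limit_measurable dens.limit_nonneg dens.limit_integrable A])
    show "(\<lambda>n. measure (\<mu> (Suc n)) A) \<longlonglongrightarrow> measure limit_law A"
      using measure_law_tendsto[OF A] by (rule LIMSEQ_Suc)
  qed
  then show ?thesis
    using P prob_space_limit_law
    by (intro measure_eqI) (auto simp: limit_law_def finite_measure.emeasure_eq_measure prob_space.finite_measure)
qed

lemma limit_law_stationary: "ladder_stationary limit_law"
  unfolding ladder_stationary_def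
proof (intro conjI ballI)
  show "prob_space limit_law" by (rule prob_space_limit_law)
  show "sets limit_law = sets borel" by (simp add: limit_law_def)
  show "emeasure limit_law A = (\<integral>\<^sup>+d. emeasure (ladder_kernel d) A \<partial>limit_law)" if "A \<in> sets borel" for A
    using that emeasure_bind_ladder_kernel[of limit_law A] limit_law_fixed by (simp add: limit_law_def)
qed

lemma law_weak_conv: "weak_conv_m \<mu> limit_law"
  unfolding weak_conv_m_def weak_conv_def cdf_def2 using measure_law_tendsto by simp

end

section \<open>The law of Delta n in the ladder model\<close>

definition edges_upto :: "nat \<Rightarrow> edge set" where
  "edges_upto n = {XE i | i. 1 \<le> i \<and> i \<le> n} \<union> {YE i | i. 1 \<le> i \<and> i \<le> n} \<union> {ZE i | i. i \<le> n}"

lemma edges_upto_ladder_edges: "edges_upto n \<subseteq> ladder_edges"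
  unfolding edges_upto_def ladder_edges_def by auto

lemma edges_upto_Suc: "edges_upto n \<subseteq> edges_upto (Suc n)"
  "XE (Suc n) \<in> edges_upto (Suc n)" "YE (Suc n) \<in> edges_upto (Suc n)" "ZE (Suc n) \<in> edges_upto (Suc n)"
  unfolding edges_upto_def by auto

lemma edges_upto_fresh: "edges_upto n \<inter> {XE (Suc n), YE (Suc n), ZE (Suc n)} = {}"
  unfolding edges_upto_def by auto

lemma Delta_local:
  "(\<And>e. e \<in> edges_upto n \<Longrightarrow> h e = W e \<omega>) \<Longrightarrow> Delta W n \<omega> = Delta (\<lambda>e g. g e) n h"
proof (induction n)
  case 0 then show ?case by (simp add: edges_upto_def)
next
  case (Suc n)
  then have "Delta W n \<omega> = Delta (\<lambda>e g. g e) n h" using edges_upto_Suc(1) by blast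
  moreover have "h (XE (Suc n)) = W (XE (Suc n)) \<omega>" "h (YE (Suc n)) = W (YE (Suc n)) \<omega>"
      "h (ZE (Suc n)) = W (ZE (Suc n)) \<omega>"
    using Suc.prems edges_upto_Suc by auto
  ultimately show ?case by simp
qed

lemma Delta_coordinates_measurable:
  "edges_upto n \<subseteq> I \<Longrightarrow> (\<lambda>h. Delta (\<lambda>e g. g e) n h) \<in> borel_measurable (PiM I (\<lambda>_. borel))"
proof (induction n)
  case 0 then show ?case by (simp add: edges_upto_def measurable_component_singleton[where M="\<lambda>_. borel"])
next
  case (Suc n)
  have [measurable]: "(\<lambda>h. Delta (\<lambda>e g. g e) n h) \<in> borel_measurable (PiM I (\<lambda>_. borel))"
    using Suc edges_upto_Suc(1) by blast
  have [measurable]: "(\<lambda>h. h (XE (Suc n))) \<in> borel_measurable (PiM I (\<lambda>_. borel))"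
    "(\<lambda>h. h (YE (Suc n))) \<in> borel_measurable (PiM I (\<lambda>_. borel))"
    "(\<lambda>h. h (ZE (Suc n))) \<in> borel_measurable (PiM I (\<lambda>_. borel))"
    using Suc.prems edges_upto_Suc by (auto intro!: measurable_component_singleton[where M="\<lambda>_. borel"])
  show ?case unfolding Delta.simps ladder_step_def by measurable
qed

locale ladder_weights =
  fixes M :: "'a measure" and W :: "edge \<Rightarrow> 'a \<Rightarrow> real"
  assumes prob_space_M: "prob_space M"
    and indep: "prob_space.indep_vars M (\<lambda>_. borel) W ladder_edges"
    and exponential: "\<forall>e \<in> ladder_edges. distributed M lborel (W e) (\<lambda>x. ennreal (exponential_density 1 x))"
begin

lemma W_measurable[measurable]: "e \<in> ladder_edges \<Longrightarrow> W e \<in> borel_measurable M"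
  using exponential by (auto simp: distributed_def)

lemma distr_W: "e \<in> ladder_edges \<Longrightarrow> distr M borel (W e) = Exp1"
proof -
  assume e: "e \<in> ladder_edges"
  have "distr M borel (W e) = distr M lborel (W e)" by (rule distr_cong) auto
  also have "\<dots> = Exp1" using exponential e by (auto simp: distributed_def Exp1_def)
  finally show ?thesis .
qed

lemma fresh_edges: "XE (Suc n) \<in> ladder_edges" "YE (Suc n) \<in> ladder_edges" "ZE n \<in> ladder_edges"
  by (auto simp: ladder_edges_def)

lemma restrict_W_measurable:
  "I \<subseteq> ladder_edges \<Longrightarrow> (\<lambda>\<omega>. restrict (\<lambda>i. W i \<omega>) I) \<in> measurable M (PiM I (\<lambda>_. borel))"
  by (intro measurable_restrict W_measurable) blast

lemma distr_pair_disjoint_edges: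
  assumes I: "I1 \<inter> I2 = {}" "I1 \<subseteq> ladder_edges" "I2 \<subseteq> ladder_edges"
    and F1: "F1 \<in> measurable (PiM I1 (\<lambda>_. borel)) S" and F2: "F2 \<in> measurable (PiM I2 (\<lambda>_. borel)) T"
  shows "distr M (S \<Otimes>\<^sub>M T) (\<lambda>\<omega>. (F1 (restrict (\<lambda>i. W i \<omega>) I1), F2 (restrict (\<lambda>i. W i \<omega>) I2)))
       = distr M S (\<lambda>\<omega>. F1 (restrict (\<lambda>i. W i \<omega>) I1)) \<Otimes>\<^sub>M distr M T (\<lambda>\<omega>. F2 (restrict (\<lambda>i. W i \<omega>) I2))"
proof -
  let ?r1 = "\<lambda>\<omega>. restrict (\<lambda>i. W i \<omega>) I1" and ?r2 = "\<lambda>\<omega>. restrict (\<lambda>i. W i \<omega>) I2"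
  let ?P1 = "PiM I1 (\<lambda>_. borel) :: (edge \<Rightarrow> real) measure" and ?P2 = "PiM I2 (\<lambda>_. borel) :: (edge \<Rightarrow> real) measure"
  have r1: "?r1 \<in> measurable M ?P1" and r2: "?r2 \<in> measurable M ?P2" using I restrict_W_measurable by auto
  have "prob_space.indep_var M ?P1 ?r1 ?P2 ?r2"
    using prob_space.indep_var_restrict[OF prob_space_M indep I] .
  then have joint: "distr M ?P1 ?r1 \<Otimes>\<^sub>M distr M ?P2 ?r2 = distr M (?P1 \<Otimes>\<^sub>M ?P2) (\<lambda>\<omega>. (?r1 \<omega>, ?r2 \<omega>))"
    using prob_space.indep_var_distribution_eq[OF prob_space_M] by blast
  have sf: "sigma_finite_measure (distr (distr M ?P2 ?r2) T F2)"
    using prob_space_M r2 F2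
    by (intro prob_space_imp_sigma_finite prob_space.prob_space_distr) (auto intro: prob_space.prob_space_distr)
  have "distr M S (\<lambda>\<omega>. F1 (?r1 \<omega>)) \<Otimes>\<^sub>M distr M T (\<lambda>\<omega>. F2 (?r2 \<omega>))
      = distr (distr M ?P1 ?r1) S F1 \<Otimes>\<^sub>M distr (distr M ?P2 ?r2) T F2"
    using r1 r2 F1 F2 by (simp add: distr_distr comp_def)
  also have "\<dots> = distr (distr M ?P1 ?r1 \<Otimes>\<^sub>M distr M ?P2 ?r2) (S \<Otimes>\<^sub>M T) (\<lambda>(x, y). (F1 x, F2 y))"
    by (rule pair_measure_distr[OF _ _ sf]) (use F1 F2 in auto)
  also have "\<dots> = distr M (S \<Otimes>\<^sub>M T) (\<lambda>\<omega>. (F1 (?r1 \<omega>), F2 (?r2 \<omega>)))"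
    unfolding joint using r1 r2 F1 F2 by (subst distr_distr) (auto simp: comp_def)
  finally show ?thesis by simp
qed

lemma distr_fresh_weights:
  "distr M (borel \<Otimes>\<^sub>M (borel \<Otimes>\<^sub>M borel)) (\<lambda>\<omega>. (W (XE (Suc n)) \<omega>, W (YE (Suc n)) \<omega>, W (ZE (Suc n)) \<omega>))
     = Exp1_cube"
proof -
  have yz: "distr M (borel \<Otimes>\<^sub>M borel) (\<lambda>\<omega>. (W (YE (Suc n)) \<omega>, W (ZE (Suc n)) \<omega>)) = Exp1 \<Otimes>\<^sub>M Exp1"
    using distr_pair_disjoint_edges[of "{YE (Suc n)}" "{ZE (Suc n)}" "\<lambda>h. h (YE (Suc n))" borel
        "\<lambda>h. h (ZE (Suc n))" borel] fresh_edges distr_W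
    by (simp add: measurable_component_singleton[where M="\<lambda>_. borel"])
  have "distr M (borel \<Otimes>\<^sub>M (borel \<Otimes>\<^sub>M borel)) (\<lambda>\<omega>. (W (XE (Suc n)) \<omega>, W (YE (Suc n)) \<omega>, W (ZE (Suc n)) \<omega>))
     = distr M borel (W (XE (Suc n))) \<Otimes>\<^sub>M distr M (borel \<Otimes>\<^sub>M borel) (\<lambda>\<omega>. (W (YE (Suc n)) \<omega>, W (ZE (Suc n)) \<omega>))"
    using distr_pair_disjoint_edges[of "{XE (Suc n)}" "{YE (Suc n), ZE (Suc n)}" "\<lambda>h. h (XE (Suc n))" borel
        "\<lambda>h. (h (YE (Suc n)), h (ZE (Suc n)))" "borel \<Otimes>\<^sub>M borel"] fresh_edges
    by (simp add: measurable_component_singleton[where M="\<lambda>_. borel"])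
  also have "\<dots> = Exp1_cube" unfolding Exp1_cube_def using yz distr_W fresh_edges by simp
  finally show ?thesis .
qed

lemma Delta_measurable: "Delta W n \<in> borel_measurable M"
proof -
  have "Delta W n = (\<lambda>h. Delta (\<lambda>e g. g e) n h) \<circ> (\<lambda>\<omega>. restrict (\<lambda>i. W i \<omega>) (edges_upto n))"
    by (rule ext) (auto intro!: Delta_local)
  then show ?thesis
    using Delta_coordinates_measurable[of n "edges_upto n"] restrict_W_measurable[OF edges_upto_ladder_edges]
    by (simp add: measurable_comp)
qed

lemma distr_Delta_fresh_weights:
  "distr M (borel \<Otimes>\<^sub>M (borel \<Otimes>\<^sub>M (borel \<Otimes>\<^sub>M borel)))
    (\<lambda>\<omega>. (Delta W n \<omega>, W (XE (Suc n)) \<omega>, W (YE (Suc n)) \<omega>, W (ZE (Suc n)) \<omega>))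
   = distr M borel (Delta W n) \<Otimes>\<^sub>M Exp1_cube"
proof -
  let ?F = "\<lambda>h. (h (XE (Suc n)), h (YE (Suc n)), h (ZE (Suc n)))"
  have F: "?F \<in> measurable (PiM {XE (Suc n), YE (Suc n), ZE (Suc n)} (\<lambda>_. borel)) (borel \<Otimes>\<^sub>M (borel \<Otimes>\<^sub>M borel))"
    by (simp add: measurable_component_singleton[where M="\<lambda>_. borel"])
  have "Delta (\<lambda>e g. g e) n (restrict (\<lambda>i. W i \<omega>) (edges_upto n)) = Delta W n \<omega>" for \<omega>
    by (auto intro!: Delta_local[symmetric])
  then show ?thesis
    using distr_pair_disjoint_edges[OF edges_upto_fresh edges_upto_ladder_edges _
        Delta_coordinates_measurable[OF order_refl] F] fresh_edges distr_fresh_weights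
    by simp
qed

lemma law_Delta_Suc: "distr M borel (Delta W (Suc n)) = distr M borel (Delta W n) \<bind> ladder_kernel"
proof (rule measure_eqI)
  show "sets (distr M borel (Delta W (Suc n))) = sets (distr M borel (Delta W n) \<bind> ladder_kernel)" by simp
  fix A assume "A \<in> sets (distr M borel (Delta W (Suc n)))"
  then have A: "A \<in> sets borel" by simp
  let ?P = "\<lambda>\<omega>. (Delta W n \<omega>, W (XE (Suc n)) \<omega>, W (YE (Suc n)) \<omega>, W (ZE (Suc n)) \<omega>)"
  let ?S = "{(d, x, y, z). ladder_step d x y z \<in> A}"
  let ?B4 = "borel \<Otimes>\<^sub>M (borel \<Otimes>\<^sub>M (borel \<Otimes>\<^sub>M borel)) :: (real \<times> real \<times> real \<times> real) measure"
  have P: "?P \<in> measurable M ?B4"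
    using Delta_measurable fresh_edges by measurable
  have S: "?S \<in> sets ?B4"
  proof -
    have "(\<lambda>(d, x, y, z). ladder_step d x y z) \<in> borel_measurable ?B4"
      unfolding ladder_step_def by measurable
    from measurable_sets[OF this A] show ?thesis by (simp add: space_pair_measure vimage_def case_prod_beta')
  qed
  have "emeasure (distr M borel (Delta W (Suc n))) A = emeasure M (?P -` ?S \<inter> space M)"
    using A Delta_measurable by (subst emeasure_distr) (auto intro!: arg_cong[where f="emeasure M"])
  also have "\<dots> = emeasure (distr M borel (Delta W n) \<Otimes>\<^sub>M Exp1_cube) ?S"
    using S P by (simp add: emeasure_distr flip: distr_Delta_fresh_weights)
  also have "\<dots> = (\<integral>\<^sup>+d. emeasure Exp1_cube (Pair d -` ?S) \<partial>distr M borel (Delta W n))"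
  proof (rule sigma_finite_measure.emeasure_pair_measure_alt)
    show "sigma_finite_measure Exp1_cube" using prob_space_Exp1_cube by (rule prob_space_imp_sigma_finite)
    have "sets (distr M borel (Delta W n) \<Otimes>\<^sub>M Exp1_cube) = sets ?B4"
      by (intro sets_pair_measure_cong) (auto simp: sets_Exp1_cube)
    then show "?S \<in> sets (distr M borel (Delta W n) \<Otimes>\<^sub>M Exp1_cube)" using S by simp
  qed
  also have "\<dots> = emeasure (distr M borel (Delta W n) \<bind> ladder_kernel) A"
    using A by (simp add: emeasure_ladder_kernel vimage_def emeasure_bind_ladder_kernel)
  finally show "emeasure (distr M borel (Delta W (Suc n))) A = emeasure (distr M borel (Delta W n) \<bind> ladder_kernel) A" .
qed

lemma ladder_chain_Delta: "ladder_chain (\<lambda>n. distr M borel (Delta W n))"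
proof -
  have Delta0: "distr M borel (Delta W 0) = Exp1"
    using distr_W[OF fresh_edges(3)[of 0]] by (simp add: fun_eq_iff[of "Delta W 0"] cong: distr_cong)
  show ?thesis
  proof (rule ladder_chain.intro)
    show "prob_space (distr M borel (Delta W 0))" using prob_space_Exp1 Delta0 by simp
    show "sets (distr M borel (Delta W 0)) = sets borel" by simp
    show "absolutely_continuous lborel (distr M borel (Delta W 0))"
      unfolding Delta0 Exp1_def by (rule absolutely_continuousI_density) simp
  qed (rule law_Delta_Suc)
qed

end

theorem mainTheorem5:
  fixes M :: "'a measure" and W :: "edge \<Rightarrow> 'a \<Rightarrow> real"
  assumes "prob_space M"
    and "prob_space.indep_vars M (\<lambda>_. borel) W ladder_edges"
    and "\<forall>e \<in> ladder_edges. distributed M lborel (W e) (\<lambda>x. ennreal (exponential_density 1 x))"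
  shows "\<exists>\<pi>. ladder_stationary \<pi>
           \<and> (\<forall>\<pi>'. ladder_stationary \<pi>' \<longrightarrow> \<pi>' = \<pi>)
           \<and> (\<forall>c. \<pi> \<noteq> return borel c)
           \<and> weak_conv_m (\<lambda>n. distr M borel (Delta W n)) \<pi>
           \<and> (\<exists>\<rho> :: real \<Rightarrow> real. \<exists>\<rho>s :: nat \<Rightarrow> real \<Rightarrow> real.
                \<rho> \<in> borel_measurable borel \<and> (\<forall>x. 0 \<le> \<rho> x)
              \<and> \<pi> = density lborel (\<lambda>x. ennreal (\<rho> x))
              \<and> (\<forall>n. (\<forall>x. 0 \<le> \<rho>s n x)
                     \<and> distributed M lborel (Delta W n) (\<lambda>x. ennreal (\<rho>s n x)))
              \<and> (\<forall>x. (\<lambda>n. \<rho>s n x) \<longlonglongrightarrow> \<rho> x))"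
proof -
  interpret L: ladder_weights M W using assms by (rule ladder_weights.intro)
  interpret C: ladder_chain "\<lambda>n. distr M borel (Delta W n)" by (rule L.ladder_chain_Delta)
  have distributed: "distributed M lborel (Delta W n) (\<lambda>x. ennreal (C.dens.version n x))" for n
  proof -
    have "distr M lborel (Delta W n) = distr M borel (Delta W n)" by (rule distr_cong) auto
    then show ?thesis
      unfolding distributed_def using C.law_version[of n] L.Delta_measurable[of n] by simp
  qed
  show ?thesis
  proof (intro exI[of _ C.limit_law] exI[of _ C.dens.limit] exI[of _ C.dens.version] conjI allI impI)
    show "ladder_stationary C.limit_law" by (rule C.limit_law_stationary)
    show "\<pi>' = C.limit_law" if "ladder_stationary \<pi>'" for \<pi>'
      using stationary_unique[OF that C.limit_law_stationary] .
    show "C.limit_law \<noteq> return borel c" for c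
      unfolding C.limit_law_def by (rule density_not_return[OF C.dens.limit_measurable])
    show "weak_conv_m (\<lambda>n. distr M borel (Delta W n)) C.limit_law" by (rule C.law_weak_conv)
    show "C.limit_law = density lborel (\<lambda>x. ennreal (C.dens.limit x))" by (rule C.limit_law_def)
  qed (auto simp: C.dens.limit_nonneg C.dens.version_nonneg C.dens.version_tendsto distributed)
qed

end
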